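(* Let $n\ge 3$. The wheel $W_n$ is H--cordial if and only if $n$ is odd.
   Context: The wheel $W_n$ has vertex set $\{v_0,v_1,\dots,v_n\}$ and edges $v_0v_i$ for $1\le i\le n$ together with the cycle edges $v_iv_{i+1}$ for $1\le i\le n$ (indices with $v_{n+1}=v_1$); so $v_0$ has degree $n$. A labeling of a graph $G$ is a map $f:E(G)\to\{-1,+1\}$; for each vertex $v$ set $f(v)=\sum_{e\in I(v)} f(e)$, where $I(v)$ is the set of edges incident to $v$. For an integer $c$, $e_f(c)$ is the number of edges with label $c$ and $v_f(c)$ the number of vertices $v$ with $f(v)=c$. A labeling $f$ is H--cordial if there is a positive constant $K$ such that $|f(v)|=K$ for every vertex $v$, $|e_f(1)-e_f(-1)|\le 1$, and $|v_f(K)-v_f(-K)|\le 1$. A graph is H--cordial if it admits an H--cordial labeling. *)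

theory Defs
  imports Main
begin

text \<open>A simple graph is given by a vertex set V and an edge set E, each edge
being a 2-element subset of V. A labeling is a map from edges to {-1,+1}.\<close>

definition vertex_label :: "'a set set \<Rightarrow> ('a set \<Rightarrow> int) \<Rightarrow> 'a \<Rightarrow> int" where
  "vertex_label E f v = (\<Sum>e\<in>{e\<in>E. v \<in> e}. f e)"

definition e_count :: "'a set set \<Rightarrow> ('a set \<Rightarrow> int) \<Rightarrow> int \<Rightarrow> int" where
  "e_count E f c = int (card {e\<in>E. f e = c})"

definition v_count :: "'a set \<Rightarrow> 'a set set \<Rightarrow> ('a set \<Rightarrow> int) \<Rightarrow> int \<Rightarrow> int" where
  "v_count V E f c = int (card {v\<in>V. vertex_label E f v = c})"

definition is_labeling :: "'a set set \<Rightarrow> ('a set \<Rightarrow> int) \<Rightarrow> bool" where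
  "is_labeling E f \<longleftrightarrow> (\<forall>e\<in>E. f e = 1 \<or> f e = -1)"

definition H_cordial_labeling :: "'a set \<Rightarrow> 'a set set \<Rightarrow> ('a set \<Rightarrow> int) \<Rightarrow> bool" where
  "H_cordial_labeling V E f \<longleftrightarrow> is_labeling E f \<and>
     (\<exists>K::int. K > 0 \<and> (\<forall>v\<in>V. \<bar>vertex_label E f v\<bar> = K) \<and>
        \<bar>e_count E f 1 - e_count E f (-1)\<bar> \<le> 1 \<and>
        \<bar>v_count V E f K - v_count V E f (-K)\<bar> \<le> 1)"

definition H_cordial :: "'a set \<Rightarrow> 'a set set \<Rightarrow> bool" where
  "H_cordial V E \<longleftrightarrow> (\<exists>f. H_cordial_labeling V E f)"

text \<open>Wheel W_n: hub 0, rim vertices 1..n, spokes {0,i}, rim edges {i, i+1} with n+1 = 1.\<close>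

definition wheel_vertices :: "nat \<Rightarrow> nat set" where
  "wheel_vertices n = {0..n}"

definition wheel_edges :: "nat \<Rightarrow> nat set set" where
  "wheel_edges n = (\<lambda>i. {0, i}) ` {1..n} \<union> (\<lambda>i. {i, i mod n + 1}) ` {1..n}"

end

theory Submission
  imports Defs
begin

text \<open>With labels in {-1, 1}, the label of a vertex has the parity of its degree, so
  a constant absolute value K of the vertex labels forces all degrees to have the same parity.
  In W_n the hub has degree n and the rim vertices have degree 3, hence n is odd.
  Conversely, for odd n label the spoke v_0 v_i by (-1)^(i+1) and the rim edge v_i v_(i+1)
  by (-1)^i. For i >= 2 the two rim edges at v_i cancel, so v_i gets the label of its spoke,
  while at v_1 both rim edges carry -1 because n is odd; the hub gets 1. The vertex labels
  1, -1, -1, 1, -1, 1, ... then sum to 0, and by the handshake identity so do the edge labels.\<close>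

lemma card_filter_diff_eq_sum:
  fixes g :: "'a \<Rightarrow> int"
  assumes "finite S" "\<forall>x\<in>S. g x = c \<or> g x = - c"
  shows "c * (int (card {x\<in>S. g x = c}) - int (card {x\<in>S. g x = - c})) = sum g S"
proof -
  have "sum g S = (\<Sum>x\<in>S. c * of_bool (g x = c) - c * of_bool (g x = - c))"
    using assms(2) by (intro sum.cong) auto
  also have "\<dots> = c * (\<Sum>x\<in>S. of_bool (g x = c)) - c * (\<Sum>x\<in>S. of_bool (g x = - c))"
    by (simp add: sum_subtractf sum_distrib_left)
  finally show ?thesis
    using assms(1) by (simp add: Collect_conj_eq Int_commute algebra_simps)
qed

lemma sum_lessThan_pairs:
  fixes g :: "nat \<Rightarrow> 'a::comm_monoid_add"
  shows "(\<Sum>i<2 * m. g i) = (\<Sum>k<m. g (2 * k) + g (2 * k + 1))"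
  by (induction m) (simp_all add: add.assoc)

lemma even_vertex_label_iff:
  assumes "finite E" "is_labeling E f"
  shows "even (vertex_label E f v) \<longleftrightarrow> even (card {e\<in>E. v \<in> e})"
proof -
  have "{e\<in>{e\<in>E. v \<in> e}. odd (f e)} = {e\<in>E. v \<in> e}"
    using assms(2) by (auto simp: is_labeling_def)
  then show ?thesis
    unfolding vertex_label_def using assms(1) by (simp add: even_sum_iff)
qed

lemma H_cordial_labeling_degree_parity:
  assumes "H_cordial_labeling V E f" "finite E" "u \<in> V" "v \<in> V"
  shows "even (card {e\<in>E. u \<in> e}) \<longleftrightarrow> even (card {e\<in>E. v \<in> e})"
proof -
  obtain K where "\<bar>vertex_label E f u\<bar> = K" "\<bar>vertex_label E f v\<bar> = K"
    using assms(1,3,4) unfolding H_cordial_labeling_def by blast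
  then have "even (vertex_label E f u) \<longleftrightarrow> even (vertex_label E f v)"
    by (metis dvd_abs_iff)
  moreover have "is_labeling E f"
    using assms(1) unfolding H_cordial_labeling_def by blast
  ultimately show ?thesis
    using assms(2) by (simp add: even_vertex_label_iff)
qed

lemma sum_vertex_label:
  assumes "finite V" "\<forall>e\<in>E. e \<subseteq> V \<and> card e = 2"
  shows "(\<Sum>v\<in>V. vertex_label E f v) = 2 * sum f E"
proof -
  have "finite E"
    using assms by (intro finite_subset[of E "Pow V"]) auto
  have "(\<Sum>v\<in>V. vertex_label E f v) = (\<Sum>e\<in>E. \<Sum>v\<in>{v\<in>V. v \<in> e}. f e)"
    unfolding vertex_label_def using assms(1) \<open>finite E\<close> by (rule sum.swap_restrict)
  also have "\<dots> = (\<Sum>e\<in>E. 2 * f e)"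
  proof (rule sum.cong)
    fix e assume "e \<in> E"
    then have "{v\<in>V. v \<in> e} = e" "card e = 2" using assms(2) by auto
    then show "(\<Sum>v\<in>{v\<in>V. v \<in> e}. f e) = 2 * f e" by simp
  qed simp
  finally show ?thesis by (simp add: sum_distrib_left)
qed

lemma H_cordial_labelingI:
  assumes "finite V" "\<forall>e\<in>E. e \<subseteq> V \<and> card e = 2" "is_labeling E f"
    and "\<forall>v\<in>V. \<bar>vertex_label E f v\<bar> = 1" "(\<Sum>v\<in>V. vertex_label E f v) = 0"
  shows "H_cordial_labeling V E f"
proof -
  have "finite E"
    using assms by (intro finite_subset[of E "Pow V"]) auto
  have "e_count E f 1 - e_count E f (-1) = sum f E"
    using card_filter_diff_eq_sum[OF \<open>finite E\<close>, of f 1] assms(3)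
    by (simp add: e_count_def is_labeling_def)
  also have "\<dots> = 0"
    using sum_vertex_label[OF assms(1,2), of f] assms(5) by simp
  finally have edges: "e_count E f 1 - e_count E f (-1) = 0" .
  have "\<forall>v\<in>V. vertex_label E f v = 1 \<or> vertex_label E f v = - 1"
    using assms(4) by (auto simp: abs_if split: if_splits)
  then have "v_count V E f 1 - v_count V E f (-1) = (\<Sum>v\<in>V. vertex_label E f v)"
    using card_filter_diff_eq_sum[OF assms(1), of "vertex_label E f" 1] by (simp add: v_count_def)
  then have vertices: "v_count V E f 1 - v_count V E f (-1) = 0"
    using assms(5) by simp
  show ?thesis
    unfolding H_cordial_labeling_def using assms(3,4) edges vertices
    by (intro conjI exI[of _ 1]) simp_all
qed

definition rim_succ :: "nat \<Rightarrow> nat \<Rightarrow> nat" where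
  "rim_succ n i = (if i = n then 1 else i + 1)"

definition rim_pred :: "nat \<Rightarrow> nat \<Rightarrow> nat" where
  "rim_pred n i = (if i = 1 then n else i - 1)"

lemma rim_pred_mem: "i \<in> {1..n} \<Longrightarrow> rim_pred n i \<in> {1..n}"
  by (auto simp: rim_pred_def)

lemma rim_succ_rim_pred: "i \<in> {1..n} \<Longrightarrow> rim_succ n (rim_pred n i) = i"
  by (auto simp: rim_succ_def rim_pred_def)

lemma rim_succ_eqD: "j \<in> {1..n} \<Longrightarrow> rim_succ n j = i \<Longrightarrow> j = rim_pred n i"
  by (auto simp: rim_succ_def rim_pred_def split: if_splits)

lemma wheel_edges_eq:
  "wheel_edges n = (\<lambda>i. {0, i}) ` {1..n} \<union> (\<lambda>i. {i, rim_succ n i}) ` {1..n}"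
proof -
  have "i mod n + 1 = rim_succ n i" if "i \<in> {1..n}" for i
    using that by (cases "i = n") (simp_all add: rim_succ_def)
  then show ?thesis
    unfolding wheel_edges_def by (metis (no_types, lifting) image_cong)
qed

lemma wheel_edges_are_pairs:
  assumes "2 \<le> n"
  shows "\<forall>e\<in>wheel_edges n. e \<subseteq> wheel_vertices n \<and> card e = 2"
  using assms by (auto simp: wheel_edges_eq wheel_vertices_def rim_succ_def)

lemma wheel_edges_at_hub: "{e \<in> wheel_edges n. 0 \<in> e} = (\<lambda>i. {0, i}) ` {1..n}"
  by (auto simp: wheel_edges_eq rim_succ_def)

lemma inj_on_spoke: "inj_on (\<lambda>i. {0::nat, i}) {1..n}"
  by (auto simp: inj_on_def doubleton_eq_iff)

lemma card_wheel_edges_at_hub: "card {e \<in> wheel_edges n. 0 \<in> e} = n"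
  unfolding wheel_edges_at_hub card_image[OF inj_on_spoke] by simp

lemma vertex_label_wheel_hub: "vertex_label (wheel_edges n) f 0 = (\<Sum>i=1..n. f {0, i})"
  unfolding vertex_label_def wheel_edges_at_hub sum.reindex[OF inj_on_spoke] by simp

lemma wheel_edges_at_rim:
  assumes "i \<in> {1..n}"
  shows "{e \<in> wheel_edges n. i \<in> e} = {{0, i}, {i, rim_succ n i}, {rim_pred n i, i}}"
proof (intro equalityI subsetI)
  fix e assume "e \<in> {e \<in> wheel_edges n. i \<in> e}"
  then consider j where "j \<in> {1..n}" "e = {0, j}" "i \<in> e"
    | j where "j \<in> {1..n}" "e = {j, rim_succ n j}" "i \<in> e"
    unfolding wheel_edges_eq by blast
  then show "e \<in> {{0, i}, {i, rim_succ n i}, {rim_pred n i, i}}"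
  proof cases
    case (1 j)
    then have "j = i" using assms by auto
    then show ?thesis using 1 by simp
  next
    case (2 j)
    then have "j = i \<or> j = rim_pred n i"
      using rim_succ_eqD by blast
    then show ?thesis
      using 2 rim_succ_rim_pred[OF assms] by (elim disjE) simp_all
  qed
next
  have "{rim_pred n i, i} = {rim_pred n i, rim_succ n (rim_pred n i)}"
    using rim_succ_rim_pred[OF assms] by simp
  then have "{0, i} \<in> wheel_edges n" "{i, rim_succ n i} \<in> wheel_edges n"
    "{rim_pred n i, i} \<in> wheel_edges n"
    using assms rim_pred_mem[OF assms] unfolding wheel_edges_eq by blast+
  then show "e \<in> {e \<in> wheel_edges n. i \<in> e}"
    if "e \<in> {{0, i}, {i, rim_succ n i}, {rim_pred n i, i}}" for e
    using that by auto
qed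

lemma wheel_edges_at_rim_distinct:
  assumes "3 \<le> n" "i \<in> {1..n}"
  shows "{0, i} \<noteq> {i, rim_succ n i}" "{0, i} \<noteq> {rim_pred n i, i}"
    and "{i, rim_succ n i} \<noteq> {rim_pred n i, i}"
proof -
  have "0 \<notin> {i, rim_succ n i}" "0 \<notin> {rim_pred n i, i}" "rim_succ n i \<notin> {rim_pred n i, i}"
    using assms by (auto simp: rim_succ_def rim_pred_def)
  then show "{0, i} \<noteq> {i, rim_succ n i}" "{0, i} \<noteq> {rim_pred n i, i}"
    and "{i, rim_succ n i} \<noteq> {rim_pred n i, i}"
    by blast+
qed

lemma card_wheel_edges_at_rim:
  assumes "3 \<le> n" "i \<in> {1..n}"
  shows "card {e \<in> wheel_edges n. i \<in> e} = 3"
  using wheel_edges_at_rim_distinct[OF assms] by (simp add: wheel_edges_at_rim[OF assms(2)])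

lemma vertex_label_wheel_rim:
  assumes "3 \<le> n" "i \<in> {1..n}"
  shows "vertex_label (wheel_edges n) f i = f {0, i} + f {i, rim_succ n i} + f {rim_pred n i, i}"
  using wheel_edges_at_rim_distinct[OF assms]
  by (simp add: vertex_label_def wheel_edges_at_rim[OF assms(2)])

lemma odd_if_H_cordial_wheel:
  assumes "3 \<le> n" "H_cordial (wheel_vertices n) (wheel_edges n)"
  shows "odd n"
proof -
  obtain f where f: "H_cordial_labeling (wheel_vertices n) (wheel_edges n) f"
    using assms(2) unfolding H_cordial_def by blast
  have "finite (wheel_edges n)"
    by (simp add: wheel_edges_def)
  moreover have "0 \<in> wheel_vertices n" "1 \<in> wheel_vertices n"
    using assms(1) by (auto simp: wheel_vertices_def)
  ultimately have "even (card {e \<in> wheel_edges n. 0 \<in> e}) \<longleftrightarrow> even (card {e \<in> wheel_edges n. 1 \<in> e})"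
    by (rule H_cordial_labeling_degree_parity[OF f])
  moreover have "card {e \<in> wheel_edges n. 1 \<in> e} = 3"
    using assms(1) by (intro card_wheel_edges_at_rim) auto
  ultimately show ?thesis
    by (simp add: card_wheel_edges_at_hub)
qed

text \<open>Spokes are recognised by the hub 0 and indexed by their other end, rim edges
  v_i v_(i+1) by their smaller end; for the closing edge v_n v_1 this gives (-1)^1,
  which equals (-1)^n for odd n.\<close>

definition wheel_labeling :: "nat set \<Rightarrow> int" where
  "wheel_labeling e = (if 0 \<in> e then (-1) ^ (Max e + 1) else (-1) ^ Min e)"

lemma wheel_labeling_spoke: "wheel_labeling {0, i} = (-1) ^ (i + 1)"
  by (simp add: wheel_labeling_def)

lemma wheel_labeling_rim:
  assumes "odd n" "i \<in> {1..n}"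
  shows "wheel_labeling {i, rim_succ n i} = (-1) ^ i"
  using assms by (auto simp: wheel_labeling_def rim_succ_def)

lemma vertex_label_wheel_labeling_hub:
  assumes "odd n"
  shows "vertex_label (wheel_edges n) wheel_labeling 0 = 1"
proof -
  obtain m where n: "n = 2 * m + 1"
    using assms oddE by blast
  have "vertex_label (wheel_edges n) wheel_labeling 0 = (\<Sum>i=1..n. (-1) ^ (i + 1))"
    by (simp add: vertex_label_wheel_hub wheel_labeling_spoke)
  also have "\<dots> = (\<Sum>i<n. (-1) ^ i)"
    unfolding One_nat_def sum.atLeast1_atMost_eq by simp
  also have "\<dots> = 1"
    by (simp add: n sum_lessThan_pairs)
  finally show ?thesis .
qed

lemma vertex_label_wheel_labeling_rim:
  assumes "odd n" "3 \<le> n" "i \<in> {1..n}"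
  shows "vertex_label (wheel_edges n) wheel_labeling i = (if i = 1 then -1 else (-1) ^ (i + 1))"
proof -
  have "wheel_labeling {rim_pred n i, i} = (-1) ^ rim_pred n i"
    using wheel_labeling_rim[OF assms(1) rim_pred_mem[OF assms(3)]]
    by (simp add: rim_succ_rim_pred[OF assms(3)])
  moreover have "(-1) ^ (i - 1) = - ((-1::int) ^ i)"
    using assms(3) by (cases i) simp_all
  ultimately show ?thesis
    using assms
    by (auto simp: vertex_label_wheel_rim wheel_labeling_spoke wheel_labeling_rim rim_pred_def)
qed

lemma sum_vertex_label_wheel_labeling:
  assumes "odd n" "3 \<le> n"
  shows "(\<Sum>v\<in>wheel_vertices n. vertex_label (wheel_edges n) wheel_labeling v) = 0"
proof -
  let ?L = "vertex_label (wheel_edges n) wheel_labeling"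
  obtain m where n: "n = 2 * m + 1"
    using assms(1) oddE by blast
  have "?L (2 * k) + ?L (2 * k + 1) = 0" if "k < m + 1" for k
  proof (cases "k = 0")
    case True
    then show ?thesis
      using assms vertex_label_wheel_labeling_hub vertex_label_wheel_labeling_rim[of n 1] by simp
  next
    case False
    then show ?thesis
      using assms that n vertex_label_wheel_labeling_rim[of n "2 * k"]
        vertex_label_wheel_labeling_rim[of n "2 * k + 1"] by simp
  qed
  moreover have "wheel_vertices n = {..<2 * (m + 1)}"
    by (auto simp: wheel_vertices_def n)
  ultimately show ?thesis
    by (simp add: sum_lessThan_pairs del: mult_Suc_right)
qed

lemma H_cordial_wheel_if_odd:
  assumes "odd n" "3 \<le> n"
  shows "H_cordial (wheel_vertices n) (wheel_edges n)"
  unfolding H_cordial_def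
proof (intro exI H_cordial_labelingI)
  show "finite (wheel_vertices n)"
    by (simp add: wheel_vertices_def)
  show "\<forall>e\<in>wheel_edges n. e \<subseteq> wheel_vertices n \<and> card e = 2"
    using assms(2) by (intro wheel_edges_are_pairs) simp
  show "is_labeling (wheel_edges n) wheel_labeling"
    by (simp add: is_labeling_def wheel_labeling_def minus_one_power_iff)
  show "\<forall>v\<in>wheel_vertices n. \<bar>vertex_label (wheel_edges n) wheel_labeling v\<bar> = 1"
  proof
    fix v assume "v \<in> wheel_vertices n"
    then consider "v = 0" | "v \<in> {1..n}"
      by (force simp: wheel_vertices_def)
    then show "\<bar>vertex_label (wheel_edges n) wheel_labeling v\<bar> = 1"
      by cases (simp_all add: assms vertex_label_wheel_labeling_hub vertex_label_wheel_labeling_rim)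
  qed
  show "(\<Sum>v\<in>wheel_vertices n. vertex_label (wheel_edges n) wheel_labeling v) = 0"
    using assms by (rule sum_vertex_label_wheel_labeling)
qed

theorem theorem4:
  fixes n :: nat
  assumes "n \<ge> 3"
  shows "H_cordial (wheel_vertices n) (wheel_edges n) \<longleftrightarrow> odd n"
  using odd_if_H_cordial_wheel[OF assms] H_cordial_wheel_if_odd[OF _ assms] by blast

end
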